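(* Let $\Gamma:\mathbb{C}^4\to\mathbb{C}^4$ be a homogeneous polynomial map such that $(x,\Gamma(x))=0$ and $(\Gamma(x),\Gamma(x))=0$ for all $x\in C$. Then there is one of the two generating families $\mathcal P$ of planes in $C$ such that for every nonzero $x\in C$, the vector $\Gamma(x)$ lies in the unique plane of $\mathcal P$ containing $x$.
   Context: $(\cdot,\cdot)$ is the standard Euclidean inner product on $\mathbb{R}^4$ extended complex-bilinearly to $\mathbb{C}^4$, and $C=\{x\in\mathbb{C}^4:(x,x)=0\}$ is the asymptotic cone. The 2-dimensional complex linear subspaces ("planes") contained in $C$ form two families, the *generating families of planes*: every nonzero $x\in C$ lies in exactly one plane of each family (these correspond to the two rulings of lines of the quadric surface $\mathbb{P}(C)\subset\mathbb{CP}^3$). *)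

theory Defs
  imports "HOL-Analysis.Analysis"
begin

definition cbil :: "complex^4 \<Rightarrow> complex^4 \<Rightarrow> complex" where
  "cbil x y = (\<Sum>i\<in>UNIV. x$i * y$i)"

definition asym_cone :: "(complex^4) set" where
  "asym_cone = {x. cbil x x = 0}"

definition hom_poly_fun :: "nat \<Rightarrow> (complex^4 \<Rightarrow> complex) \<Rightarrow> bool" where
  "hom_poly_fun d f \<longleftrightarrow>
     (\<exists>(M :: (4 \<Rightarrow> nat) set) (c :: (4 \<Rightarrow> nat) \<Rightarrow> complex).
        finite M \<and> (\<forall>\<alpha>\<in>M. (\<Sum>i\<in>UNIV. \<alpha> i) = d) \<and>
        (\<forall>x. f x = (\<Sum>\<alpha>\<in>M. c \<alpha> * (\<Prod>i\<in>UNIV. (x$i) ^ \<alpha> i))))"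

definition hom_poly_map :: "(complex^4 \<Rightarrow> complex^4) \<Rightarrow> bool" where
  "hom_poly_map \<Gamma> \<longleftrightarrow> (\<exists>d. \<forall>i. hom_poly_fun d (\<lambda>x. \<Gamma> x $ i))"

definition cone_plane :: "(complex^4) set \<Rightarrow> bool" where
  "cone_plane P \<longleftrightarrow> vec.subspace P \<and> vec.dim P = 2 \<and> P \<subseteq> asym_cone"

text \<open>A generating family (ruling): the class of a plane under the relation
  "equal or meeting only in 0" (planes of the same family are skew).\<close>
definition generating_family :: "(complex^4) set set \<Rightarrow> bool" where
  "generating_family \<F> \<longleftrightarrow>
     (\<exists>P0. cone_plane P0 \<and> \<F> = {P. cone_plane P \<and> (P = P0 \<or> P \<inter> P0 = {0})})"

end

theory Submission
  imports Defs "HOL-Complex_Analysis.Conformal_Mappings"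
begin

text \<open>Identify \<open>\<complex>\<^sup>4\<close> with \<open>2 \<times> 2\<close> matrices so that \<open>(x, x)\<close> becomes the determinant. Then
  \<open>C\<close> consists of the matrices of rank at most one, and its planes are the planes
  \<open>{u w\<^sup>T}\<close> of a fixed column direction \<open>u\<close> and the planes \<open>{w v\<^sup>T}\<close> of a fixed row
  direction \<open>v\<close>: these are the two rulings. For \<open>x \<in> C\<close> the hypotheses say that \<open>x\<close>,
  \<open>\<Gamma>(x)\<close> and \<open>x + \<Gamma>(x)\<close> are singular, and for \<open>2 \<times> 2\<close> matrices this forces the columns of
  \<open>\<Gamma>(x)\<close> to be parallel to those of \<open>x\<close>, or the rows to the rows. Pulled back along the
  parametrization \<open>(u, v) \<mapsto> u v\<^sup>T\<close> of \<open>C\<close>, the two alternatives are the vanishing of two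
  families of polynomials whose pairwise products vanish identically. Polynomials are
  holomorphic on every complex line, so by the identity theorem one family vanishes
  identically: one alternative holds on all of \<open>C\<close>, and it selects the ruling.\<close>

section \<open>Linear algebra\<close>

lemma vector_4 [simp]:
  "(vector [a, b, c, d] :: 'a::zero^4) $ 1 = a"
  "(vector [a, b, c, d] :: 'a::zero^4) $ 2 = b"
  "(vector [a, b, c, d] :: 'a::zero^4) $ 3 = c"
  "(vector [a, b, c, d] :: 'a::zero^4) $ 4 = d"
  by (simp_all add: vector_def)

lemma vec_dim_eq_card_if_bij_linear:
  fixes f :: "'a::field^'m \<Rightarrow> 'a^'n"
  assumes "Vector_Spaces.linear (*s) (*s) f" and "vec.subspace S"
    and "inj_on f S" and "f ` S = UNIV"
  shows "vec.dim S = CARD('n)"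
  using vec.dim_image_eq[OF assms(1), of S] assms(2-4)
  by (simp add: card_cart_basis vec.span_eq_iff[THEN iffD2])

lemma linear_image_eq_UNIV_if_inj_on:
  fixes f :: "'a::field^'m \<Rightarrow> 'a^'n"
  assumes f: "Vector_Spaces.linear (*s) (*s) f" and S: "vec.subspace S"
    and "inj_on f S" and "vec.dim S = CARD('n)"
  shows "f ` S = UNIV"
proof -
  have "vec.dim (f ` S) = vec.dim (UNIV :: ('a^'n) set)"
    using vec.dim_image_eq[OF f, of S] assms(2-4)
    by (simp add: card_cart_basis vec.span_eq_iff[THEN iffD2])
  moreover have "vec.subspace (f ` S)"
    by (rule vec.linear_subspace_image[OF f S])
  ultimately show ?thesis
    by (metis vec.subspace_UNIV vec.subspace_dim_equal top_greatest order_refl)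
qed

definition columns_parallel :: "'a::comm_ring_1^'m^2 \<Rightarrow> 'a^'n^2 \<Rightarrow> bool" where
  "columns_parallel M N \<longleftrightarrow> (\<forall>i j. M$1$i * N$2$j = M$2$i * N$1$j)"

lemma singular_pencil_columns_or_rows_parallel:
  fixes M N :: "'a::idom^2^2"
  assumes "det M = 0" and "det N = 0" and "det (M + N) = 0"
  shows "columns_parallel M N \<or> columns_parallel (transpose M) (transpose N)"
proof -
  have "M$1$1 * M$2$2 = M$1$2 * M$2$1" and "N$1$1 * N$2$2 = N$1$2 * N$2$1"
    and "M$1$1 * N$2$2 + N$1$1 * M$2$2 = M$1$2 * N$2$1 + N$1$2 * M$2$1"
    using assms by (simp_all add: det_2 algebra_simps)
  \<comment> \<open>each column minor times each row minor lies in the ideal of the three determinants\<close>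
  then have "\<forall>i j k l.
      (M$1$i * N$2$j - M$2$i * N$1$j) * (M$k$1 * N$l$2 - M$k$2 * N$l$1) = 0"
    unfolding forall_2 by (intro conjI; algebra)
  then show ?thesis
    unfolding columns_parallel_def transpose_def by simp
qed

lemma det_2_eq_0_imp_outer_product:
  fixes M :: "'a::field^2^2"
  assumes "det M = 0"
  shows "\<exists>u1 u2 v1 v2. M = vector [vector [u1 * v1, u1 * v2], vector [u2 * v1, u2 * v2]]"
proof -
  have adbc: "M$1$1 * M$2$2 = M$1$2 * M$2$1"
    using assms by (simp add: det_2)
  consider "M$1$1 \<noteq> 0" | "M$1$1 = 0" "M$1$2 \<noteq> 0" | "M$1$1 = 0" "M$1$2 = 0"
    by blast
  then show ?thesis
  proof cases
    case 1
    then have "M = vector [vector [M$1$1 * 1, M$1$1 * (M$1$2 / M$1$1)],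
                           vector [M$2$1 * 1, M$2$1 * (M$1$2 / M$1$1)]]"
      using adbc by (simp add: vec_eq_iff forall_2 field_simps)
    then show ?thesis by blast
  next
    case 2
    then have "M = vector [vector [M$1$2 * 0, M$1$2 * 1], vector [M$2$2 * 0, M$2$2 * 1]]"
      using adbc by (simp add: vec_eq_iff forall_2)
    then show ?thesis by blast
  next
    case 3
    then have "M = vector [vector [0 * M$2$1, 0 * M$2$2], vector [1 * M$2$1, 1 * M$2$2]]"
      by (simp add: vec_eq_iff forall_2)
    then show ?thesis by blast
  qed
qed

section \<open>The rulings of the cone in a determinantal chart\<close>

locale rank_one_chart =
  fixes ent :: "complex^4 \<Rightarrow> complex^2^2"
  assumes ent_add: "ent (x + y) = ent x + ent y"
    and ent_scale: "ent (c *s x) $ i $ j = c * ent x $ i $ j"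
    and bij_ent: "bij ent"
    and asym_cone_iff_det: "x \<in> asym_cone \<longleftrightarrow> det (ent x) = 0"
begin

lemma linear_row: "Vector_Spaces.linear (*s) (*s) (\<lambda>x. ent x $ i)"
  unfolding Vector_Spaces.linear_iff
  by (simp add: vec.vector_space_axioms ent_add ent_scale vec_eq_iff)

lemma ent_eq_iff: "ent x = ent y \<longleftrightarrow> x = y"
  using bij_ent by (metis bij_is_inj inj_eq)

lemma ent_eq_0_iff [simp]: "ent x = 0 \<longleftrightarrow> x = 0"
  using ent_add[of 0 0] ent_eq_iff[of x 0] by simp

lemma ent_lincomb [simp]:
  "ent (s *s p + t *s q) $ i $ j = s * ent p $ i $ j + t * ent q $ i $ j"
  by (simp add: ent_add ent_scale)

text \<open>For \<open>u \<noteq> 0\<close>, the plane of all matrices whose columns are multiples of \<open>u\<close>.\<close>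
definition column_plane :: "complex^2 \<Rightarrow> (complex^4) set" where
  "column_plane u = {x. \<forall>j. u$1 * ent x$2$j = u$2 * ent x$1$j}"

lemma column_plane_axis_1: "column_plane (axis 1 1) = {x. ent x $ 2 = 0}"
  by (auto simp: column_plane_def axis_def vec_eq_iff)

lemma cone_plane_column_plane_axis_1: "cone_plane (column_plane (axis 1 1))"
proof -
  let ?P0 = "{x. ent x $ 2 = 0}"
  have sub: "vec.subspace ?P0"
    by (rule vec.linear_subspace_kernel[OF linear_row])
  have "inj_on (\<lambda>x. ent x $ 1) ?P0"
    by (rule inj_onI) (simp add: ent_eq_iff[symmetric] vec_eq_iff forall_2)
  moreover have "(\<lambda>x. ent x $ 1) ` ?P0 = UNIV"
  proof (intro set_eqI iffI)
    fix v :: "complex^2"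
    have "ent (inv ent (vector [v, 0])) = vector [v, 0]"
      by (simp add: bij_ent bij_is_surj surj_f_inv_f)
    then show "v \<in> (\<lambda>x. ent x $ 1) ` ?P0"
      by (intro image_eqI[of _ _ "inv ent (vector [v, 0])"]) simp_all
  qed simp
  ultimately have "vec.dim ?P0 = 2"
    using vec_dim_eq_card_if_bij_linear[OF linear_row sub] by simp
  moreover have "?P0 \<subseteq> asym_cone"
    by (auto simp: asym_cone_iff_det det_2)
  ultimately show ?thesis
    using sub by (simp add: column_plane_axis_1 cone_plane_def)
qed

lemma bij_betw_second_row:
  assumes "cone_plane P" and "P \<inter> column_plane (axis 1 1) = {0}"
  shows "bij_betw (\<lambda>x. ent x $ 2) P UNIV"
proof -
  have sub: "vec.subspace P" and "vec.dim P = 2"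
    using assms(1) by (auto simp: cone_plane_def)
  have "inj_on (\<lambda>x. ent x $ 2) P"
    unfolding vec.linear_inj_on_iff_eq_0[OF linear_row sub]
    using assms(2) by (auto simp: column_plane_axis_1)
  moreover have "(\<lambda>x. ent x $ 2) ` P = UNIV"
    using linear_image_eq_UNIV_if_inj_on[OF linear_row sub calculation] \<open>vec.dim P = 2\<close>
    by simp
  ultimately show ?thesis
    by (simp add: bij_betw_def)
qed

lemma skew_cone_plane_basis:
  assumes "cone_plane P" and "P \<inter> column_plane (axis 1 1) = {0}"
  obtains l p q where "p \<in> P" and "q \<in> P"
    and "ent p = vector [vector [l, 0], vector [1, 0]]"
    and "ent q = vector [vector [0, l], vector [0, 1]]"
proof -
  have "vector [1, 0] \<in> (\<lambda>x. ent x $ 2) ` P" and "vector [0, 1] \<in> (\<lambda>x. ent x $ 2) ` P"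
    using bij_betw_second_row[OF assms] by (simp_all add: bij_betw_def)
  then obtain p q where "p \<in> P" "q \<in> P"
    and p2: "ent p $ 2 = vector [1, 0]" and q2: "ent q $ 2 = vector [0, 1]"
    by (elim imageE) (rule that, simp_all)
  have "vec.subspace P" and cone: "P \<subseteq> asym_cone"
    using assms(1) by (simp_all add: cone_plane_def)
  then have "p + q \<in> P"
    using \<open>p \<in> P\<close> \<open>q \<in> P\<close> by (simp add: vec.subspace_add)
  moreover have "det (ent x) = 0" if "x \<in> P" for x
    using subsetD[OF cone that] by (simp add: asym_cone_iff_det)
  ultimately have "det (ent p) = 0" and "det (ent q) = 0" and "det (ent (p + q)) = 0"
    using \<open>p \<in> P\<close> \<open>q \<in> P\<close> by simp_all
  then have "ent p $ 1 $ 2 = 0" and "ent q $ 1 $ 1 = 0" and "ent q $ 1 $ 2 = ent p $ 1 $ 1"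
    using p2 q2 by (simp_all add: det_2 ent_add)
  then have "ent p = vector [vector [ent p $ 1 $ 1, 0], vector [1, 0]]"
    and "ent q = vector [vector [0, ent p $ 1 $ 1], vector [0, 1]]"
    using p2 q2 by (simp_all add: vec_eq_iff forall_2)
  then show thesis
    using that \<open>p \<in> P\<close> \<open>q \<in> P\<close> by blast
qed

lemma eq_column_plane_if_skew:
  assumes "cone_plane P" and "P \<inter> column_plane (axis 1 1) = {0}"
  shows "\<exists>u. P = column_plane u"
proof -
  obtain l p q where "p \<in> P" "q \<in> P"
    and p: "ent p = vector [vector [l, 0], vector [1, 0]]"
    and q: "ent q = vector [vector [0, l], vector [0, 1]]"
    using skew_cone_plane_basis[OF assms] .
  have "vec.subspace P"
    using assms(1) by (simp add: cone_plane_def)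
  let ?comb = "\<lambda>z. ent z $ 2 $ 1 *s p + ent z $ 2 $ 2 *s q"
  have comb_in: "?comb z \<in> P" for z
    using \<open>vec.subspace P\<close> \<open>p \<in> P\<close> \<open>q \<in> P\<close> by (simp add: vec.subspace_add vec.subspace_scale)
  have row2_comb: "ent (?comb z) $ 2 = ent z $ 2"
    and row1_comb: "ent (?comb z) $ 1 = l *s ent z $ 2" for z
    by (simp_all add: p q vec_eq_iff forall_2 algebra_simps)
  have "P = column_plane (vector [l, 1])"
  proof (intro set_eqI iffI)
    fix y assume "y \<in> P"
    then have "?comb y = y"
      using bij_betw_second_row[OF assms] comb_in row2_comb
      by (meson bij_betw_imp_inj_on inj_onD)
    then have "ent y $ 1 = l *s ent y $ 2"
      using row1_comb[of y] by simp
    then show "y \<in> column_plane (vector [l, 1])"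
      by (simp add: column_plane_def)
  next
    fix z assume "z \<in> column_plane (vector [l, 1])"
    then have "ent (?comb z) $ 1 = ent z $ 1"
      using row1_comb[of z] by (simp add: column_plane_def vec_eq_iff)
    then have "ent (?comb z) = ent z"
      using row2_comb[of z] by (simp add: vec_eq_iff forall_2)
    then show "z \<in> P"
      using comb_in by (metis ent_eq_iff)
  qed
  then show ?thesis ..
qed

lemma mem_column_plane_if_columns_parallel:
  assumes "x \<in> column_plane u" and "x \<noteq> 0" and "columns_parallel (ent x) (ent y)"
  shows "y \<in> column_plane u"
proof -
  have "ent x \<noteq> 0"
    using assms(2) by simp
  then obtain k i where "ent x $ k $ i \<noteq> 0"
    by (auto simp: vec_eq_iff)
  then have i: "ent x $ 1 $ i \<noteq> 0 \<or> ent x $ 2 $ i \<noteq> 0"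
    using exhaust_2[of k] by auto
  have "u$1 * ent y$2$j = u$2 * ent y$1$j" for j
  proof -
    have "u$1 * ent x$2$i = u$2 * ent x$1$i"
      and "ent x$1$i * ent y$2$j = ent x$2$i * ent y$1$j"
      using assms(1,3) by (auto simp: column_plane_def columns_parallel_def)
    then have "ent x$1$i * (u$1 * ent y$2$j - u$2 * ent y$1$j) = 0"
      and "ent x$2$i * (u$1 * ent y$2$j - u$2 * ent y$1$j) = 0"
      by algebra+
    then show ?thesis
      using i by auto
  qed
  then show ?thesis
    by (simp add: column_plane_def)
qed

lemma generating_family_if_columns_parallel:
  assumes "\<And>x. x \<in> asym_cone \<Longrightarrow> columns_parallel (ent x) (ent (\<Gamma> x))"
  shows "\<exists>\<F>. generating_family \<F> \<and>
           (\<forall>x\<in>asym_cone. x \<noteq> 0 \<longrightarrow> (\<forall>P\<in>\<F>. x \<in> P \<longrightarrow> \<Gamma> x \<in> P))"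
proof -
  define P0 where "P0 = column_plane (axis 1 1)"
  define \<F> where "\<F> = {P. cone_plane P \<and> (P = P0 \<or> P \<inter> P0 = {0})}"
  have "generating_family \<F>"
    using cone_plane_column_plane_axis_1 unfolding generating_family_def \<F>_def P0_def by blast
  moreover have "\<Gamma> x \<in> P" if "x \<in> asym_cone" "x \<noteq> 0" "P \<in> \<F>" "x \<in> P" for x P
  proof -
    obtain u where "P = column_plane u"
      using \<open>P \<in> \<F>\<close> eq_column_plane_if_skew unfolding \<F>_def P0_def by blast
    then show ?thesis
      using mem_column_plane_if_columns_parallel assms that by blast
  qed
  ultimately show ?thesis
    by blast
qed

end

text \<open>The isomorphism \<open>\<complex>\<^sup>4 \<cong> \<complex>\<^sup>2 \<otimes> \<complex>\<^sup>2\<close> under which \<open>(x, x)\<close> becomes the determinant.\<close>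
definition spin_matrix :: "complex^4 \<Rightarrow> complex^2^2" where
  "spin_matrix x = vector [vector [x$1 + \<i> * x$2, - (x$3 + \<i> * x$4)],
                           vector [x$3 - \<i> * x$4, x$1 - \<i> * x$2]]"

definition of_spin_matrix :: "complex^2^2 \<Rightarrow> complex^4" where
  "of_spin_matrix M = vector [(M$1$1 + M$2$2) / 2, \<i> * (M$2$2 - M$1$1) / 2,
                              (M$2$1 - M$1$2) / 2, \<i> * (M$1$2 + M$2$1) / 2]"

lemma spin_matrix_of_spin_matrix [simp]: "spin_matrix (of_spin_matrix M) = M"
  by (simp add: spin_matrix_def of_spin_matrix_def vec_eq_iff forall_2 field_simps)

lemma of_spin_matrix_spin_matrix [simp]: "of_spin_matrix (spin_matrix x) = x"
  by (simp add: spin_matrix_def of_spin_matrix_def vec_eq_iff forall_4 field_simps)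

lemma spin_matrix_add: "spin_matrix (x + y) = spin_matrix x + spin_matrix y"
  by (simp add: spin_matrix_def vec_eq_iff forall_2 algebra_simps)

lemma spin_matrix_scale: "spin_matrix (c *s x) $ i $ j = c * spin_matrix x $ i $ j"
  using exhaust_2[of i] exhaust_2[of j] by (auto simp: spin_matrix_def algebra_simps)

lemma bij_spin_matrix: "bij spin_matrix"
  by (rule o_bij[of of_spin_matrix]) (simp_all add: fun_eq_iff)

lemma det_spin_matrix: "det (spin_matrix x) = cbil x x"
  by (simp add: det_2 spin_matrix_def cbil_def sum_4 algebra_simps power2_eq_square)

lemma cbil_self_add: "cbil (x + y) (x + y) = cbil x x + 2 * cbil x y + cbil y y"
  by (simp add: cbil_def sum_4 algebra_simps)

interpretation spin: rank_one_chart spin_matrix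
  by unfold_locales
    (simp_all add: spin_matrix_add spin_matrix_scale bij_spin_matrix asym_cone_def det_spin_matrix)

interpretation spin_transposed: rank_one_chart "\<lambda>x. transpose (spin_matrix x)"
proof unfold_locales
  show "bij (\<lambda>x. transpose (spin_matrix x))"
    by (rule o_bij[of "\<lambda>M. of_spin_matrix (transpose M)"]) (simp_all add: fun_eq_iff)
  show "x \<in> asym_cone \<longleftrightarrow> det (transpose (spin_matrix x)) = 0" for x
    by (simp add: asym_cone_def det_spin_matrix)
qed (simp_all add: transpose_def spin_matrix_add spin_matrix_scale vec_eq_iff)

section \<open>Functions holomorphic along complex lines\<close>

definition holomorphic_along_lines :: "(complex^'n \<Rightarrow> complex) \<Rightarrow> bool" where
  "holomorphic_along_lines f \<longleftrightarrow> (\<forall>a v. (\<lambda>t. f (a + t *s v)) holomorphic_on UNIV)"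

named_theorems holomorphic_along_lines_intros

lemma holomorphic_along_lines_const [holomorphic_along_lines_intros]:
  "holomorphic_along_lines (\<lambda>w. c)"
  by (simp add: holomorphic_along_lines_def)

lemma holomorphic_along_lines_component [holomorphic_along_lines_intros]:
  "holomorphic_along_lines (\<lambda>w. w $ k)"
  by (simp add: holomorphic_along_lines_def holomorphic_intros)

lemma holomorphic_along_lines_add [holomorphic_along_lines_intros]:
  "holomorphic_along_lines f \<Longrightarrow> holomorphic_along_lines g \<Longrightarrow>
   holomorphic_along_lines (\<lambda>w. f w + g w)"
  by (simp add: holomorphic_along_lines_def holomorphic_on_add)

lemma holomorphic_along_lines_diff [holomorphic_along_lines_intros]:
  "holomorphic_along_lines f \<Longrightarrow> holomorphic_along_lines g \<Longrightarrow>
   holomorphic_along_lines (\<lambda>w. f w - g w)"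
  by (simp add: holomorphic_along_lines_def holomorphic_on_diff)

lemma holomorphic_along_lines_minus [holomorphic_along_lines_intros]:
  "holomorphic_along_lines f \<Longrightarrow> holomorphic_along_lines (\<lambda>w. - f w)"
  by (simp add: holomorphic_along_lines_def holomorphic_on_minus)

lemma holomorphic_along_lines_mult [holomorphic_along_lines_intros]:
  "holomorphic_along_lines f \<Longrightarrow> holomorphic_along_lines g \<Longrightarrow>
   holomorphic_along_lines (\<lambda>w. f w * g w)"
  by (simp add: holomorphic_along_lines_def holomorphic_on_mult)

lemma holomorphic_along_lines_divide_const [holomorphic_along_lines_intros]:
  "holomorphic_along_lines f \<Longrightarrow> holomorphic_along_lines (\<lambda>w. f w / c)"
  by (simp add: holomorphic_along_lines_def holomorphic_intros)

lemma holomorphic_along_lines_power [holomorphic_along_lines_intros]: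
  "holomorphic_along_lines f \<Longrightarrow> holomorphic_along_lines (\<lambda>w. f w ^ n)"
  by (simp add: holomorphic_along_lines_def holomorphic_on_power)

lemma holomorphic_along_lines_sum [holomorphic_along_lines_intros]:
  "(\<And>i. i \<in> I \<Longrightarrow> holomorphic_along_lines (f i)) \<Longrightarrow>
   holomorphic_along_lines (\<lambda>w. \<Sum>i\<in>I. f i w)"
  by (auto simp: holomorphic_along_lines_def intro!: holomorphic_on_sum)

lemma holomorphic_along_lines_prod [holomorphic_along_lines_intros]:
  "(\<And>i. i \<in> I \<Longrightarrow> holomorphic_along_lines (f i)) \<Longrightarrow>
   holomorphic_along_lines (\<lambda>w. \<Prod>i\<in>I. f i w)"
  by (auto simp: holomorphic_along_lines_def intro!: holomorphic_on_prod)

lemma holomorphic_along_lines_hom_poly_fun: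
  assumes "hom_poly_fun d p" and "\<And>k. holomorphic_along_lines (\<lambda>w. h w $ k)"
  shows "holomorphic_along_lines (\<lambda>w. p (h w))"
proof -
  obtain M c where "\<And>x. p x = (\<Sum>\<alpha>\<in>M. c \<alpha> * (\<Prod>i\<in>UNIV. (x$i) ^ \<alpha> i))"
    using assms(1) by (auto simp: hom_poly_fun_def)
  moreover have "holomorphic_along_lines (\<lambda>w. \<Sum>\<alpha>\<in>M. c \<alpha> * (\<Prod>i\<in>UNIV. (h w $ i) ^ \<alpha> i))"
    by (intro holomorphic_along_lines_intros assms(2))
  ultimately show ?thesis
    by simp
qed

text \<open>On the line through a point where \<open>f \<noteq> 0\<close> and a point where \<open>g \<noteq> 0\<close>, \<open>g\<close> vanishes
  near the first point, hence on the whole line by analytic continuation.\<close>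
lemma holomorphic_along_lines_mult_eq_0:
  assumes f: "holomorphic_along_lines f" and g: "holomorphic_along_lines g"
    and fg: "\<And>w. f w * g w = 0"
  shows "(\<forall>w. f w = 0) \<or> (\<forall>w. g w = 0)"
proof (rule ccontr)
  assume "\<not> ?thesis"
  then obtain a b where "f a \<noteq> 0" and "g b \<noteq> 0"
    by auto
  define F where "F = (\<lambda>t. f (a + t *s (b - a)))"
  define G where "G = (\<lambda>t. g (a + t *s (b - a)))"
  have holF: "F holomorphic_on UNIV" and holG: "G holomorphic_on UNIV"
    using f g unfolding holomorphic_along_lines_def F_def G_def by blast+
  have "continuous (at 0) F"
    using holomorphic_on_imp_continuous_on[OF holF] by (simp add: continuous_on_eq_continuous_at)
  moreover have "F 0 \<noteq> 0"
    using \<open>f a \<noteq> 0\<close> by (simp add: F_def)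
  ultimately obtain r where "r > 0" and r: "\<And>t. dist 0 t < r \<Longrightarrow> F t \<noteq> 0"
    using continuous_at_avoid by metis
  have "G t = 0" if "t \<in> ball 0 r" for t
    using r[of t] that fg[of "a + t *s (b - a)"] by (simp add: F_def G_def)
  then have "G 1 = 0"
    using analytic_continuation[OF holG open_UNIV connected_UNIV, of "ball 0 r" 0 1] \<open>r > 0\<close>
    by (simp add: islimpt_ball)
  then show False
    using \<open>g b \<noteq> 0\<close> by (simp add: G_def)
qed

lemma holomorphic_along_lines_zero_dichotomy:
  assumes "\<And>i. holomorphic_along_lines (F i)" and "\<And>j. holomorphic_along_lines (G j)"
    and "\<And>w. (\<forall>i. F i w = 0) \<or> (\<forall>j. G j w = 0)"
  shows "(\<forall>i w. F i w = 0) \<or> (\<forall>j w. G j w = 0)"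
proof (rule ccontr)
  assume "\<not> ?thesis"
  then obtain i j a b where "F i a \<noteq> 0" and "G j b \<noteq> 0"
    by auto
  moreover have "F i w * G j w = 0" for w
    using assms(3)[of w] by auto
  ultimately show False
    using holomorphic_along_lines_mult_eq_0[OF assms(1,2)] by blast
qed

lemma columns_parallel_dichotomy:
  fixes A B :: "complex^'n \<Rightarrow> complex^2^2"
  assumes "\<And>i j. holomorphic_along_lines (\<lambda>w. A w $ i $ j)"
    and "\<And>i j. holomorphic_along_lines (\<lambda>w. B w $ i $ j)"
    and "\<And>w. columns_parallel (A w) (B w) \<or> columns_parallel (transpose (A w)) (transpose (B w))"
  shows "(\<forall>w. columns_parallel (A w) (B w)) \<or>
         (\<forall>w. columns_parallel (transpose (A w)) (transpose (B w)))"
proof -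
  define F where "F = (\<lambda>(i, j) w. A w $ 1 $ i * B w $ 2 $ j - A w $ 2 $ i * B w $ 1 $ j)"
  define G where "G = (\<lambda>(i, j) w. A w $ i $ 1 * B w $ j $ 2 - A w $ i $ 2 * B w $ j $ 1)"
  have cols: "columns_parallel (A w) (B w) \<longleftrightarrow> (\<forall>ij. F ij w = 0)" for w
    by (simp add: columns_parallel_def F_def)
  have rows: "columns_parallel (transpose (A w)) (transpose (B w)) \<longleftrightarrow> (\<forall>ij. G ij w = 0)" for w
    by (simp add: columns_parallel_def transpose_def G_def)
  have "holomorphic_along_lines (F ij)" and "holomorphic_along_lines (G ij)" for ij
    by (cases ij; simp add: F_def G_def; intro holomorphic_along_lines_intros assms(1,2))+
  then show ?thesis
    using holomorphic_along_lines_zero_dichotomy[of F G] assms(3) cols rows by blast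
qed

text \<open>The parametrization \<open>(u, v) \<mapsto> u v\<^sup>T\<close> of the cone, with \<open>w = (u\<^sub>1, u\<^sub>2, v\<^sub>1, v\<^sub>2)\<close>.\<close>
definition segre :: "complex^4 \<Rightarrow> complex^4" where
  "segre w =
     of_spin_matrix (vector [vector [w$1 * w$3, w$1 * w$4], vector [w$2 * w$3, w$2 * w$4]])"

lemma range_segre: "range segre = asym_cone"
proof (intro antisym subsetI)
  fix x assume "x \<in> range segre"
  then show "x \<in> asym_cone"
    by (auto simp: spin.asym_cone_iff_det segre_def det_2 algebra_simps)
next
  fix x assume "x \<in> asym_cone"
  then obtain u1 u2 v1 v2
    where M: "spin_matrix x = vector [vector [u1 * v1, u1 * v2], vector [u2 * v1, u2 * v2]]"
    using det_2_eq_0_imp_outer_product spin.asym_cone_iff_det by blast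
  have "segre (vector [u1, u2, v1, v2]) = of_spin_matrix (spin_matrix x)"
    by (simp add: segre_def M)
  then show "x \<in> range segre"
    by (metis of_spin_matrix_spin_matrix rangeI)
qed

lemma holomorphic_along_lines_spin_matrix:
  assumes "\<And>k. holomorphic_along_lines (\<lambda>w. h w $ k)"
  shows "holomorphic_along_lines (\<lambda>w. spin_matrix (h w) $ i $ j)"
  using exhaust_2[of i] exhaust_2[of j]
  by (auto simp: spin_matrix_def intro!: holomorphic_along_lines_intros assms)

lemma holomorphic_along_lines_segre: "holomorphic_along_lines (\<lambda>w. segre w $ k)"
  using exhaust_4[of k]
  by (auto simp: segre_def of_spin_matrix_def intro!: holomorphic_along_lines_intros)

lemma columns_or_rows_parallel_on_asym_cone:
  assumes "hom_poly_map \<Gamma>"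
    and "\<And>x. x \<in> asym_cone \<Longrightarrow>
           columns_parallel (spin_matrix x) (spin_matrix (\<Gamma> x)) \<or>
           columns_parallel (transpose (spin_matrix x)) (transpose (spin_matrix (\<Gamma> x)))"
  shows "(\<forall>x\<in>asym_cone. columns_parallel (spin_matrix x) (spin_matrix (\<Gamma> x))) \<or>
         (\<forall>x\<in>asym_cone.
            columns_parallel (transpose (spin_matrix x)) (transpose (spin_matrix (\<Gamma> x))))"
proof -
  obtain d where "\<And>k. hom_poly_fun d (\<lambda>x. \<Gamma> x $ k)"
    using assms(1) by (auto simp: hom_poly_map_def)
  then have "holomorphic_along_lines (\<lambda>w. \<Gamma> (segre w) $ k)" for k
    using holomorphic_along_lines_hom_poly_fun holomorphic_along_lines_segre by blast
  moreover have "segre w \<in> asym_cone" for w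
    using range_segre by blast
  ultimately have
    "(\<forall>w. columns_parallel (spin_matrix (segre w)) (spin_matrix (\<Gamma> (segre w)))) \<or>
     (\<forall>w. columns_parallel (transpose (spin_matrix (segre w)))
                            (transpose (spin_matrix (\<Gamma> (segre w)))))"
    using assms(2)
    by (intro columns_parallel_dichotomy holomorphic_along_lines_spin_matrix
        holomorphic_along_lines_segre) blast+
  then show ?thesis
    unfolding range_segre[symmetric] by blast
qed

theorem mainTheorem10:
  fixes \<Gamma> :: "complex^4 \<Rightarrow> complex^4"
  assumes "hom_poly_map \<Gamma>"
    and "\<And>x. x \<in> asym_cone \<Longrightarrow> cbil x (\<Gamma> x) = 0"
    and "\<And>x. x \<in> asym_cone \<Longrightarrow> cbil (\<Gamma> x) (\<Gamma> x) = 0"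
  shows "\<exists>\<F>. generating_family \<F> \<and>
           (\<forall>x\<in>asym_cone. x \<noteq> 0 \<longrightarrow> (\<forall>P\<in>\<F>. x \<in> P \<longrightarrow> \<Gamma> x \<in> P))"
proof -
  have "columns_parallel (spin_matrix x) (spin_matrix (\<Gamma> x)) \<or>
        columns_parallel (transpose (spin_matrix x)) (transpose (spin_matrix (\<Gamma> x)))"
    if "x \<in> asym_cone" for x
  proof (rule singular_pencil_columns_or_rows_parallel)
    show "det (spin_matrix x) = 0"
      using that by (simp add: det_spin_matrix asym_cone_def)
    show "det (spin_matrix (\<Gamma> x)) = 0"
      using assms(3)[OF that] by (simp add: det_spin_matrix)
    show "det (spin_matrix x + spin_matrix (\<Gamma> x)) = 0"
      using that assms(2,3)[OF that]
      by (simp add: det_spin_matrix asym_cone_def cbil_self_add flip: spin_matrix_add)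
  qed
  then have "(\<forall>x\<in>asym_cone. columns_parallel (spin_matrix x) (spin_matrix (\<Gamma> x))) \<or>
    (\<forall>x\<in>asym_cone. columns_parallel (transpose (spin_matrix x)) (transpose (spin_matrix (\<Gamma> x))))"
    by (rule columns_or_rows_parallel_on_asym_cone[OF assms(1)])
  then show ?thesis
    using spin.generating_family_if_columns_parallel
      spin_transposed.generating_family_if_columns_parallel
    by blast
qed

end
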